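(* Let $T$ be a causal theory with explainable symbols $\mathbf{p}$ all of whose rules are D-rules, let $\Pi$ be the conjunction of $\mathrm{tr}_d[R]$ over all rules $R$ of $T$, and let $CC$ be the conjunction of the completeness constraints for $\mathbf{p}$. Then $\mathrm{SM}_{\mathbf{p}\widehat{\mathbf{p}}}[\Pi\land CC]\models T\land CC$.
   Context: A causal theory $T$ consists of a list $\mathbf{p}$ of distinct predicate constants (explainable symbols, not equality) and a finite set of causal rules $F\Leftarrow G$. With predicate variables $u_p$ ($p\in\mathbf{p}$), list $\mathbf{u}$, $T^\dagger(\mathbf{u})$ is the conjunction of $\forall\mathbf{x}(G\to F^{\mathbf{p}}_{\mathbf{u}})$ over the rules ($\mathbf{x}$ the free variables, $F^{\mathbf{p}}_{\mathbf{u}}$ replaces each $p$ by $u_p$), and $T$ is identified with the sentence $\forall\mathbf{u}(T^\dagger(\mathbf{u})\leftrightarrow(\mathbf{u}=\mathbf{p}))$, where $\mathbf{u}=\mathbf{p}$ is $\bigwedge_p\forall\mathbf{x}(u_p(\mathbf{x})\leftrightarrow p(\mathbf{x}))$. A D-rule has the form $\bigvee_{A\in Pos}A\lor\bigvee_{A\in Neg}\neg A\Leftarrow G$ with $Pos,Neg$ finite sets of atoms with predicates in $\mathbf{p}$ and $G$ without $\to$. For $p\in\mathbf{p}$, $\widehat p$ is a new predicate constant of the same arity; for $A=p(\mathbf{t})$, $\widehat A=\widehat p(\mathbf{t})$. $\mathrm{tr}_d$ of the D-rule is $\widetilde\forall\big(\neg\neg G\land\bigwedge_{A\in Pos}(\widehat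 A\lor\neg\widehat A)\land\bigwedge_{A\in Neg}(A\lor\neg A)\to\bigvee_{A\in Pos}A\lor\bigvee_{A\in Neg}\widehat A\big)$ ($\widetilde\forall$ = universal closure). $CC$ is the conjunction over $p\in\mathbf{p}$ of $\forall\mathbf{x}\neg(p(\mathbf{x})\land\widehat p(\mathbf{x}))$ and $\forall\mathbf{x}\neg(\neg p(\mathbf{x})\land\neg\widehat p(\mathbf{x}))$. For a logic program $F$ (conjunction of sentences $\widetilde\forall(F_1\to F_2)$ with no other $\to$), $\mathrm{SM}_{\mathbf{p}\widehat{\mathbf{p}}}[F]$ is $F\land\neg\exists\mathbf{u}\widehat{\mathbf{u}}\big(((\mathbf{u},\widehat{\mathbf{u}})<(\mathbf{p},\widehat{\mathbf{p}}))\land F^\diamond(\mathbf{u},\widehat{\mathbf{u}})\big)$, where $\widehat{\mathbf{u}}=(\widehat u_p)$ are further predicate variables, $F^\diamond$ replaces each occurrence of $p$ / $\widehat p$ not in the scope of $\neg$ by $u_p$ / $\widehat u_p$, $p\le q$ is $\forall\mathbf{x}(p(\mathbf{x})\to q(\mathbf{x}))$ (componentwise for tuples) and $\mathbf{a}<\mathbf{b}$ is $(\mathbf{a}\le\mathbf{b})\land\neg(\mathbf{b}\le\mathbf{a})$. $\models$ is classical (second-order) entailment. *)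

theory Defs
  imports Main
begin

datatype 'f trm = Var nat | Fn 'f "'f trm list"

text \<open>First-order formulas over function symbols 'f and predicate constants 'p.
  Negation is a primitive connective (the SM operator treats the scope of negation specially).\<close>
datatype ('f, 'p) fm =
    Bot | Top
  | Atom 'p "'f trm list"
  | Eq "'f trm" "'f trm"
  | Neg "('f, 'p) fm"
  | Conj "('f, 'p) fm" "('f, 'p) fm"
  | Disj "('f, 'p) fm" "('f, 'p) fm"
  | Imp "('f, 'p) fm" "('f, 'p) fm"
  | All nat "('f, 'p) fm"
  | Ex nat "('f, 'p) fm"

text \<open>Predicate symbols after adding the hatted copies: Base p is p, Hat p is \<open>\<widehat>p\<close>.\<close>
datatype 'p psym = Base 'p | Hat 'p

fun conjs :: "('f, 'p) fm list \<Rightarrow> ('f, 'p) fm" where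
  "conjs [] = Top"
| "conjs (F # Fs) = Conj F (conjs Fs)"

fun disjs :: "('f, 'p) fm list \<Rightarrow> ('f, 'p) fm" where
  "disjs [] = Bot"
| "disjs (F # Fs) = Disj F (disjs Fs)"

fun noimp :: "('f, 'p) fm \<Rightarrow> bool" where
  "noimp (Imp F G) = False"
| "noimp (Neg F) = noimp F"
| "noimp (Conj F G) = (noimp F \<and> noimp G)"
| "noimp (Disj F G) = (noimp F \<and> noimp G)"
| "noimp (All x F) = noimp F"
| "noimp (Ex x F) = noimp F"
| "noimp _ = True"

fun wf_fm :: "('p \<Rightarrow> nat) \<Rightarrow> ('f, 'p) fm \<Rightarrow> bool" where
  "wf_fm ar (Atom p ts) = (length ts = ar p)"
| "wf_fm ar (Neg F) = wf_fm ar F"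
| "wf_fm ar (Conj F G) = (wf_fm ar F \<and> wf_fm ar G)"
| "wf_fm ar (Disj F G) = (wf_fm ar F \<and> wf_fm ar G)"
| "wf_fm ar (Imp F G) = (wf_fm ar F \<and> wf_fm ar G)"
| "wf_fm ar (All x F) = wf_fm ar F"
| "wf_fm ar (Ex x F) = wf_fm ar F"
| "wf_fm ar _ = True"

fun tval :: "('f \<Rightarrow> 'a list \<Rightarrow> 'a) \<Rightarrow> (nat \<Rightarrow> 'a) \<Rightarrow> 'f trm \<Rightarrow> 'a" where
  "tval Fi \<sigma> (Var n) = \<sigma> n"
| "tval Fi \<sigma> (Fn f ts) = Fi f (map (tval Fi \<sigma>) ts)"

fun eval :: "('f \<Rightarrow> 'a list \<Rightarrow> 'a) \<Rightarrow> ('p \<Rightarrow> 'a list \<Rightarrow> bool) \<Rightarrow> (nat \<Rightarrow> 'a) \<Rightarrow> ('f, 'p) fm \<Rightarrow> bool" where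
  "eval Fi R \<sigma> Bot = False"
| "eval Fi R \<sigma> Top = True"
| "eval Fi R \<sigma> (Atom p ts) = R p (map (tval Fi \<sigma>) ts)"
| "eval Fi R \<sigma> (Eq s t) = (tval Fi \<sigma> s = tval Fi \<sigma> t)"
| "eval Fi R \<sigma> (Neg F) = (\<not> eval Fi R \<sigma> F)"
| "eval Fi R \<sigma> (Conj F G) = (eval Fi R \<sigma> F \<and> eval Fi R \<sigma> G)"
| "eval Fi R \<sigma> (Disj F G) = (eval Fi R \<sigma> F \<or> eval Fi R \<sigma> G)"
| "eval Fi R \<sigma> (Imp F G) = (eval Fi R \<sigma> F \<longrightarrow> eval Fi R \<sigma> G)"
| "eval Fi R \<sigma> (All x F) = (\<forall>a. eval Fi R (\<sigma>(x := a)) F)"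
| "eval Fi R \<sigma> (Ex x F) = (\<exists>a. eval Fi R (\<sigma>(x := a)) F)"

definition holds :: "('f \<Rightarrow> 'a list \<Rightarrow> 'a) \<Rightarrow> ('p \<Rightarrow> 'a list \<Rightarrow> bool) \<Rightarrow> ('f, 'p) fm \<Rightarrow> bool" where
  "holds Fi R F = (\<forall>\<sigma>. eval Fi R \<sigma> F)"

text \<open>Evaluation of \<open>F\<^sup>\<diamond>(u,\<widehat>u)\<close>: occurrences of predicates not in the scope of negation are
  interpreted by J (J agrees with R on the non-replaced predicates), those inside the scope of
  negation by R.\<close>
fun evalD :: "('f \<Rightarrow> 'a list \<Rightarrow> 'a) \<Rightarrow> ('p \<Rightarrow> 'a list \<Rightarrow> bool) \<Rightarrow> ('p \<Rightarrow> 'a list \<Rightarrow> bool) \<Rightarrow> (nat \<Rightarrow> 'a) \<Rightarrow> ('f, 'p) fm \<Rightarrow> bool" where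
  "evalD Fi R J \<sigma> Bot = False"
| "evalD Fi R J \<sigma> Top = True"
| "evalD Fi R J \<sigma> (Atom p ts) = J p (map (tval Fi \<sigma>) ts)"
| "evalD Fi R J \<sigma> (Eq s t) = (tval Fi \<sigma> s = tval Fi \<sigma> t)"
| "evalD Fi R J \<sigma> (Neg F) = (\<not> eval Fi R \<sigma> F)"
| "evalD Fi R J \<sigma> (Conj F G) = (evalD Fi R J \<sigma> F \<and> evalD Fi R J \<sigma> G)"
| "evalD Fi R J \<sigma> (Disj F G) = (evalD Fi R J \<sigma> F \<or> evalD Fi R J \<sigma> G)"
| "evalD Fi R J \<sigma> (Imp F G) = (evalD Fi R J \<sigma> F \<longrightarrow> evalD Fi R J \<sigma> G)"
| "evalD Fi R J \<sigma> (All x F) = (\<forall>a. evalD Fi R J (\<sigma>(x := a)) F)"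
| "evalD Fi R J \<sigma> (Ex x F) = (\<exists>a. evalD Fi R J (\<sigma>(x := a)) F)"

text \<open>A D-rule  \<open>\<Or>Pos \<or> \<Or>\<not>Neg \<Leftarrow> G\<close>; atoms are pairs (predicate, argument terms).\<close>
datatype ('f, 'p) drule =
  DRule (pos: "('p \<times> 'f trm list) list") (neg: "('p \<times> 'f trm list) list") (body: "('f, 'p) fm")

definition head :: "('f, 'p) drule \<Rightarrow> ('f, 'p) fm" where
  "head r = disjs (map (\<lambda>(p, ts). Atom p ts) (pos r) @ map (\<lambda>(p, ts). Neg (Atom p ts)) (neg r))"

definition is_D_rule :: "('p \<Rightarrow> nat) \<Rightarrow> 'p set \<Rightarrow> ('f, 'p) drule \<Rightarrow> bool" where
  "is_D_rule ar P r \<longleftrightarrow>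
     (\<forall>(p, ts) \<in> set (pos r) \<union> set (neg r). p \<in> P \<and> length ts = ar p)
     \<and> noimp (body r) \<and> wf_fm ar (body r)"

text \<open>\<open>u = p\<close> (relations compared on tuples of the right arity).\<close>
definition rel_eq :: "('p \<Rightarrow> nat) \<Rightarrow> 'p set \<Rightarrow> ('p \<Rightarrow> 'a list \<Rightarrow> bool) \<Rightarrow> ('p \<Rightarrow> 'a list \<Rightarrow> bool) \<Rightarrow> bool" where
  "rel_eq ar P U R \<longleftrightarrow> (\<forall>p\<in>P. \<forall>xs. length xs = ar p \<longrightarrow> (U p xs \<longleftrightarrow> R p xs))"

text \<open>\<open>T\<^sup>\<dagger>(u)\<close>: for every rule, \<open>\<forall>x (G \<rightarrow> F\<^sup>p\<^sub>u)\<close>.\<close>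
definition Tdag :: "'p set \<Rightarrow> ('f, 'p) drule list \<Rightarrow> ('f \<Rightarrow> 'a list \<Rightarrow> 'a) \<Rightarrow> ('p \<Rightarrow> 'a list \<Rightarrow> bool)
    \<Rightarrow> ('p \<Rightarrow> 'a list \<Rightarrow> bool) \<Rightarrow> bool" where
  "Tdag P rules Fi R U \<longleftrightarrow>
     (\<forall>r \<in> set rules. \<forall>\<sigma>. eval Fi R \<sigma> (body r) \<longrightarrow>
        eval Fi (\<lambda>q. if q \<in> P then U q else R q) \<sigma> (head r))"

text \<open>The causal theory T as the second-order sentence \<open>\<forall>u (T\<^sup>\<dagger>(u) \<leftrightarrow> u = p)\<close>.\<close>
definition causal_sat :: "('p \<Rightarrow> nat) \<Rightarrow> 'p set \<Rightarrow> ('f, 'p) drule list \<Rightarrow> ('f \<Rightarrow> 'a list \<Rightarrow> 'a)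
    \<Rightarrow> ('p \<Rightarrow> 'a list \<Rightarrow> bool) \<Rightarrow> bool" where
  "causal_sat ar P rules Fi R \<longleftrightarrow> (\<forall>U. Tdag P rules Fi R U \<longleftrightarrow> rel_eq ar P U R)"

definition tr_d :: "('f, 'p) drule \<Rightarrow> ('f, 'p psym) fm" where
  "tr_d r = Imp
     (Conj (Neg (Neg (map_fm id Base (body r))))
       (Conj (conjs (map (\<lambda>(p, ts). Disj (Atom (Hat p) ts) (Neg (Atom (Hat p) ts))) (pos r)))
             (conjs (map (\<lambda>(p, ts). Disj (Atom (Base p) ts) (Neg (Atom (Base p) ts))) (neg r)))))
     (disjs (map (\<lambda>(p, ts). Atom (Base p) ts) (pos r) @ map (\<lambda>(p, ts). Atom (Hat p) ts) (neg r)))"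

definition vars_tuple :: "nat \<Rightarrow> 'f trm list" where
  "vars_tuple n = map Var [0..<n]"

definition cc1 :: "('p \<Rightarrow> nat) \<Rightarrow> 'p \<Rightarrow> ('f, 'p psym) fm" where
  "cc1 ar p = Neg (Conj (Atom (Base p) (vars_tuple (ar p))) (Atom (Hat p) (vars_tuple (ar p))))"

definition cc2 :: "('p \<Rightarrow> nat) \<Rightarrow> 'p \<Rightarrow> ('f, 'p psym) fm" where
  "cc2 ar p = Neg (Conj (Neg (Atom (Base p) (vars_tuple (ar p)))) (Neg (Atom (Hat p) (vars_tuple (ar p)))))"

text \<open>Programs are represented as sets of formulas, each standing for its universal closure;
  the program is their conjunction.\<close>
definition CC :: "('p \<Rightarrow> nat) \<Rightarrow> 'p set \<Rightarrow> ('f, 'p psym) fm set" where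
  "CC ar P = (\<Union>p\<in>P. {cc1 ar p, cc2 ar p})"

definition Pi :: "('f, 'p) drule list \<Rightarrow> ('f, 'p psym) fm set" where
  "Pi rules = tr_d ` set rules"

definition prog_sat :: "('f \<Rightarrow> 'a list \<Rightarrow> 'a) \<Rightarrow> ('q \<Rightarrow> 'a list \<Rightarrow> bool) \<Rightarrow> ('f, 'q) fm set \<Rightarrow> bool" where
  "prog_sat Fi I Prog \<longleftrightarrow> (\<forall>F \<in> Prog. holds Fi I F)"

fun psym_ar :: "('p \<Rightarrow> nat) \<Rightarrow> 'p psym \<Rightarrow> nat" where
  "psym_ar ar (Base p) = ar p"
| "psym_ar ar (Hat p) = ar p"

definition psyms :: "'p set \<Rightarrow> 'p psym set" where
  "psyms P = Base ` P \<union> Hat ` P"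

definition rel_le :: "('q \<Rightarrow> nat) \<Rightarrow> 'q set \<Rightarrow> ('q \<Rightarrow> 'a list \<Rightarrow> bool) \<Rightarrow> ('q \<Rightarrow> 'a list \<Rightarrow> bool) \<Rightarrow> bool" where
  "rel_le ar S J I \<longleftrightarrow> (\<forall>q\<in>S. \<forall>xs. length xs = ar q \<longrightarrow> J q xs \<longrightarrow> I q xs)"

definition rel_lt :: "('q \<Rightarrow> nat) \<Rightarrow> 'q set \<Rightarrow> ('q \<Rightarrow> 'a list \<Rightarrow> bool) \<Rightarrow> ('q \<Rightarrow> 'a list \<Rightarrow> bool) \<Rightarrow> bool" where
  "rel_lt ar S J I \<longleftrightarrow> rel_le ar S J I \<and> \<not> rel_le ar S I J"

text \<open>\<open>SM\<^sub>p\<^sub>\<widehat>p[F]\<close> holds in (Fi, I): F holds and there is no \<open>(u,\<widehat>u) < (p,\<widehat>p)\<close> satisfying \<open>F\<^sup>\<diamond>(u,\<widehat>u)\<close>.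
  J interprets the predicate variables u, \<open>\<widehat>u\<close> on \<open>psyms P\<close> and agrees with I elsewhere.\<close>
definition SM_sat :: "('p \<Rightarrow> nat) \<Rightarrow> 'p set \<Rightarrow> ('f, 'p psym) fm set \<Rightarrow> ('f \<Rightarrow> 'a list \<Rightarrow> 'a)
    \<Rightarrow> ('p psym \<Rightarrow> 'a list \<Rightarrow> bool) \<Rightarrow> bool" where
  "SM_sat ar P Prog Fi I \<longleftrightarrow> prog_sat Fi I Prog \<and>
     \<not> (\<exists>J. (\<forall>q. q \<notin> psyms P \<longrightarrow> J q = I q) \<and> rel_lt (psym_ar ar) (psyms P) J I
            \<and> (\<forall>F \<in> Prog. \<forall>\<sigma>. evalD Fi I J \<sigma> F))"

end

theory Submission
  imports Defs
begin

text \<open>Write R for the interpretation of the base predicates. Under CC the hatted predicates are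
  the complements of the base ones, so \<open>tr\<^sub>d\<close> of a rule says exactly that R satisfies the rule;
  hence \<open>T\<^sup>\<dagger>(p)\<close> holds. Conversely, if \<open>T\<^sup>\<dagger>(u)\<close> holds for some u \<noteq> R, then shrinking p to
  \<open>p \<and> u\<close> and \<open>\<widehat>p\<close> to \<open>\<widehat>p \<and> \<not>u\<close> gives a strictly smaller interpretation that still satisfies
  \<open>(\<Pi> \<and> CC)\<^sup>\<diamond>\<close>, contradicting stability.\<close>

lemma eval_disjs [simp]: "eval Fi R s (disjs Fs) \<longleftrightarrow> (\<exists>F\<in>set Fs. eval Fi R s F)"
  by (induction Fs) auto

lemma eval_conjs [simp]: "eval Fi R s (conjs Fs) \<longleftrightarrow> (\<forall>F\<in>set Fs. eval Fi R s F)"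
  by (induction Fs) auto

lemma evalD_disjs [simp]: "evalD Fi R J s (disjs Fs) \<longleftrightarrow> (\<exists>F\<in>set Fs. evalD Fi R J s F)"
  by (induction Fs) auto

lemma evalD_conjs [simp]: "evalD Fi R J s (conjs Fs) \<longleftrightarrow> (\<forall>F\<in>set Fs. evalD Fi R J s F)"
  by (induction Fs) auto

lemma eval_map_fm_Base: "eval Fi I s (map_fm id Base F) \<longleftrightarrow> eval Fi (\<lambda>p. I (Base p)) s F"
  by (induction F arbitrary: s) (auto simp: trm.map_id0)

lemma map_tval_vars_tuple: "map (tval Fi (\<lambda>i. xs ! i)) (vars_tuple (length xs)) = xs"
  unfolding vars_tuple_def by (simp add: o_def map_nth)

lemma is_D_rule_atom:
  assumes "is_D_rule ar P r" "(p, ts) \<in> set (pos r) \<union> set (neg r)"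
  shows "p \<in> P" "length ts = ar p"
  using assms unfolding is_D_rule_def by auto

lemma prog_sat_CC_Hat_iff:
  assumes "prog_sat Fi I (CC ar P)" "p \<in> P" "length xs = ar p"
  shows "I (Hat p) xs \<longleftrightarrow> \<not> I (Base p) xs"
proof -
  have "holds Fi I (cc1 ar p)" "holds Fi I (cc2 ar p)"
    using assms(1,2) unfolding prog_sat_def CC_def by auto
  then have "eval Fi I (\<lambda>i. xs ! i) (cc1 ar p)" "eval Fi I (\<lambda>i. xs ! i) (cc2 ar p)"
    unfolding holds_def by auto
  then show ?thesis
    unfolding cc1_def cc2_def using map_tval_vars_tuple[of Fi xs] assms(3) by auto
qed

text \<open>The completeness constraints are negated formulas, so their \<open>\<diamond>\<close>-translation is themselves.\<close>
lemma evalD_CC: "F \<in> CC ar P \<Longrightarrow> evalD Fi I J s F \<longleftrightarrow> eval Fi I s F"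
  unfolding CC_def cc1_def cc2_def by auto

lemma eval_head:
  "eval Fi V s (head r) \<longleftrightarrow>
     (\<exists>(p, ts)\<in>set (pos r). V p (map (tval Fi s) ts))
     \<or> (\<exists>(p, ts)\<in>set (neg r). \<not> V p (map (tval Fi s) ts))"
  unfolding head_def by (auto simp: bex_Un) force+

lemma eval_tr_d:
  "eval Fi I s (tr_d r) \<longleftrightarrow>
     (eval Fi (\<lambda>p. I (Base p)) s (body r) \<longrightarrow>
        (\<exists>(p, ts)\<in>set (pos r). I (Base p) (map (tval Fi s) ts))
        \<or> (\<exists>(p, ts)\<in>set (neg r). I (Hat p) (map (tval Fi s) ts)))"
  unfolding tr_d_def by (auto simp: eval_map_fm_Base bex_Un) force+

lemma evalD_tr_d:
  "evalD Fi I J s (tr_d r) \<longleftrightarrow>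
     (eval Fi (\<lambda>p. I (Base p)) s (body r)
      \<and> (\<forall>(p, ts)\<in>set (pos r). J (Hat p) (map (tval Fi s) ts) \<or> \<not> I (Hat p) (map (tval Fi s) ts))
      \<and> (\<forall>(p, ts)\<in>set (neg r). J (Base p) (map (tval Fi s) ts) \<or> \<not> I (Base p) (map (tval Fi s) ts))
      \<longrightarrow> (\<exists>(p, ts)\<in>set (pos r). J (Base p) (map (tval Fi s) ts))
        \<or> (\<exists>(p, ts)\<in>set (neg r). J (Hat p) (map (tval Fi s) ts)))"
  unfolding tr_d_def by (auto simp: eval_map_fm_Base bex_Un) force+


lemma Tdag_cong:
  assumes D: "\<forall>r\<in>set rules. is_D_rule ar P r" and eq: "rel_eq ar P U V"
  shows "Tdag P rules Fi R U \<longleftrightarrow> Tdag P rules Fi R V"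
proof -
  have "eval Fi (\<lambda>q. if q \<in> P then U q else R q) s (head r)
    \<longleftrightarrow> eval Fi (\<lambda>q. if q \<in> P then V q else R q) s (head r)" if "r \<in> set rules" for r s
  proof -
    have "U p (map (tval Fi s) ts) \<longleftrightarrow> V p (map (tval Fi s) ts)"
      if "(p, ts) \<in> set (pos r) \<union> set (neg r)" for p ts
      using is_D_rule_atom[OF D[rule_format, OF \<open>r \<in> set rules\<close>] that] eq
      unfolding rel_eq_def by simp
    then show ?thesis
      unfolding eval_head using D \<open>r \<in> set rules\<close> by (fastforce dest: is_D_rule_atom)
  qed
  then show ?thesis unfolding Tdag_def by blast
qed

lemma Tdag_model:
  assumes D: "\<forall>r\<in>set rules. is_D_rule ar P r" and sat: "prog_sat Fi I (Pi rules \<union> CC ar P)"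
  shows "Tdag P rules Fi (\<lambda>p. I (Base p)) (\<lambda>p. I (Base p))"
  unfolding Tdag_def
proof (intro ballI allI impI)
  fix r s assume r: "r \<in> set rules" and body: "eval Fi (\<lambda>p. I (Base p)) s (body r)"
  have cc: "prog_sat Fi I (CC ar P)" using sat unfolding prog_sat_def by simp
  have "eval Fi I s (tr_d r)" using sat r unfolding prog_sat_def Pi_def holds_def by simp
  then have "(\<exists>(p, ts)\<in>set (pos r). I (Base p) (map (tval Fi s) ts))
      \<or> (\<exists>(p, ts)\<in>set (neg r). \<not> I (Base p) (map (tval Fi s) ts))"
    unfolding eval_tr_d using body prog_sat_CC_Hat_iff[OF cc] is_D_rule_atom[OF D[rule_format, OF r]]
    by fastforce
  then show "eval Fi (\<lambda>q. if q \<in> P then I (Base q) else I (Base q)) s (head r)"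
    unfolding eval_head by simp
qed


definition narrow :: "'p set \<Rightarrow> ('p psym \<Rightarrow> 'a list \<Rightarrow> bool) \<Rightarrow> ('p \<Rightarrow> 'a list \<Rightarrow> bool)
    \<Rightarrow> 'p psym \<Rightarrow> 'a list \<Rightarrow> bool" where
  "narrow P I U q xs = (case q of
      Base p \<Rightarrow> I (Base p) xs \<and> (p \<in> P \<longrightarrow> U p xs)
    | Hat p \<Rightarrow> I (Hat p) xs \<and> (p \<in> P \<longrightarrow> \<not> U p xs))"

lemma narrow_outside_psyms: "q \<notin> psyms P \<Longrightarrow> narrow P I U q = I q"
  unfolding psyms_def by (cases q) (auto simp: narrow_def fun_eq_iff)

lemma narrow_le: "rel_le ar S (narrow P I U) I"
  unfolding rel_le_def narrow_def by (auto split: psym.split)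

lemma narrow_lt:
  assumes cc: "prog_sat Fi I (CC ar P)" and neq: "\<not> rel_eq ar P U (\<lambda>p. I (Base p))"
  shows "rel_lt (psym_ar ar) (psyms P) (narrow P I U) I"
proof -
  obtain p xs where p: "p \<in> P" "length xs = ar p" and diff: "U p xs \<noteq> I (Base p) xs"
    using neq unfolding rel_eq_def by auto
  have "Base p \<in> psyms P" "Hat p \<in> psyms P" using p(1) unfolding psyms_def by auto
  moreover have "\<not> narrow P I U (Base p) xs \<and> I (Base p) xs \<or> \<not> narrow P I U (Hat p) xs \<and> I (Hat p) xs"
    using diff prog_sat_CC_Hat_iff[OF cc p] p(1) unfolding narrow_def by auto
  ultimately have "\<not> rel_le (psym_ar ar) (psyms P) I (narrow P I U)"
    unfolding rel_le_def using p(2) by force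
  then show ?thesis unfolding rel_lt_def using narrow_le by blast
qed

lemma evalD_narrow_tr_d:
  assumes D: "is_D_rule ar P r" and r: "r \<in> set rules"
    and cc: "prog_sat Fi I (CC ar P)" and T: "Tdag P rules Fi (\<lambda>p. I (Base p)) U"
  shows "evalD Fi I (narrow P I U) s (tr_d r)"
  unfolding evalD_tr_d
proof (intro impI, elim conjE)
  let ?J = "narrow P I U" and ?v = "\<lambda>ts. map (tval Fi s) ts"
  assume body: "eval Fi (\<lambda>p. I (Base p)) s (body r)"
    and pos_em: "\<forall>(p, ts)\<in>set (pos r). ?J (Hat p) (?v ts) \<or> \<not> I (Hat p) (?v ts)"
    and neg_em: "\<forall>(p, ts)\<in>set (neg r). ?J (Base p) (?v ts) \<or> \<not> I (Base p) (?v ts)"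
  have atom: "p \<in> P" "length (?v ts) = ar p" if "(p, ts) \<in> set (pos r) \<union> set (neg r)" for p ts
    using is_D_rule_atom[OF D that] by simp_all
  have "eval Fi (\<lambda>q. if q \<in> P then U q else I (Base q)) s (head r)"
    using T r body unfolding Tdag_def by blast
  then have "(\<exists>(p, ts)\<in>set (pos r). U p (?v ts)) \<or> (\<exists>(p, ts)\<in>set (neg r). \<not> U p (?v ts))"
    unfolding eval_head using atom by fastforce
  text \<open>The \<open>\<diamond>\<close>-translated excluded middle for \<open>\<widehat>p\<close> forces \<open>\<not>\<widehat>p\<close>, hence p by CC, at a
    positive head atom made true by u; dually for negative head atoms.\<close>
  then show "(\<exists>(p, ts)\<in>set (pos r). ?J (Base p) (?v ts)) \<or> (\<exists>(p, ts)\<in>set (neg r). ?J (Hat p) (?v ts))"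
    using pos_em neg_em atom prog_sat_CC_Hat_iff[OF cc] unfolding narrow_def by fastforce
qed

lemma rel_eq_if_Tdag_stable:
  assumes D: "\<forall>r\<in>set rules. is_D_rule ar P r" and sm: "SM_sat ar P (Pi rules \<union> CC ar P) Fi I"
    and T: "Tdag P rules Fi (\<lambda>p. I (Base p)) U"
  shows "rel_eq ar P U (\<lambda>p. I (Base p))"
proof (rule ccontr)
  assume neq: "\<not> rel_eq ar P U (\<lambda>p. I (Base p))"
  have cc: "prog_sat Fi I (CC ar P)" using sm unfolding SM_sat_def prog_sat_def by simp
  have "evalD Fi I (narrow P I U) s F" if F: "F \<in> Pi rules \<union> CC ar P" for F s
  proof (cases "F \<in> CC ar P")
    case True
    then show ?thesis using cc unfolding evalD_CC[OF True] prog_sat_def holds_def by blast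
  next
    case False
    then obtain r where "r \<in> set rules" "F = tr_d r" using F unfolding Pi_def by auto
    then show ?thesis using evalD_narrow_tr_d D cc T by blast
  qed
  then show False
    using sm narrow_outside_psyms narrow_lt[OF cc neq] unfolding SM_sat_def by blast
qed

theorem lemma5:
  fixes ar :: "'p \<Rightarrow> nat" and P :: "'p set" and rules :: "('f, 'p) drule list"
    and Fi :: "'f \<Rightarrow> 'a list \<Rightarrow> 'a" and I :: "'p psym \<Rightarrow> 'a list \<Rightarrow> bool"
  assumes "finite P"
    and "\<forall>r \<in> set rules. is_D_rule ar P r"
    and "SM_sat ar P (Pi rules \<union> CC ar P) Fi I"
  shows "causal_sat ar P rules Fi (\<lambda>p. I (Base p)) \<and> prog_sat Fi I (CC ar P)"
proof -
  have sat: "prog_sat Fi I (Pi rules \<union> CC ar P)" using assms(3) unfolding SM_sat_def by simp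
  have "Tdag P rules Fi (\<lambda>p. I (Base p)) U \<longleftrightarrow> rel_eq ar P U (\<lambda>p. I (Base p))" for U
  proof
    assume "rel_eq ar P U (\<lambda>p. I (Base p))"
    then show "Tdag P rules Fi (\<lambda>p. I (Base p)) U"
      using Tdag_cong[OF assms(2)] Tdag_model[OF assms(2) sat] by blast
  qed (rule rel_eq_if_Tdag_stable[OF assms(2,3)])
  then show ?thesis using sat unfolding causal_sat_def prog_sat_def by blast
qed

end
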